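(* A regular $n$-tournament is $(n-1)$-spectrally monomorphic if and only if it is $(n-1)$-skew-spectrally monomorphic.
   Context: An $n$-tournament is a digraph in which every pair of distinct vertices is joined by exactly one arc. Its adjacency matrix $A=(a_{ij})$ has $a_{ij}=1$ if $v_i$ dominates $v_j$ and $0$ otherwise; its skew-adjacency matrix is $S=A-A^{\top}$. A tournament is regular if all its vertices have the same out-degree. A tournament is $k$-spectrally monomorphic (resp. $k$-skew-spectrally monomorphic) if all $k\times k$ principal submatrices of $A$ (resp. of $S$) have the same characteristic polynomial $\det(zI-M)$. *)

theory Defs
  imports "Jordan_Normal_Form.Char_Poly" "Jordan_Normal_Form.DL_Submatrix"
begin

text \<open>An n-tournament on vertex set {0..<n}: T i j means v_i dominates v_j.
  Every pair of distinct vertices is joined by exactly one arc; no loops.\<close>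
definition tournament :: "nat \<Rightarrow> (nat \<Rightarrow> nat \<Rightarrow> bool) \<Rightarrow> bool" where
  "tournament n T \<longleftrightarrow>
     (\<forall>i<n. \<not> T i i) \<and> (\<forall>i<n. \<forall>j<n. i \<noteq> j \<longrightarrow> (T i j \<longleftrightarrow> \<not> T j i))"

definition out_degree :: "nat \<Rightarrow> (nat \<Rightarrow> nat \<Rightarrow> bool) \<Rightarrow> nat \<Rightarrow> nat" where
  "out_degree n T i = card {j. j < n \<and> T i j}"

definition regular_tournament :: "nat \<Rightarrow> (nat \<Rightarrow> nat \<Rightarrow> bool) \<Rightarrow> bool" where
  "regular_tournament n T \<longleftrightarrow> tournament n T \<and>
     (\<forall>i<n. \<forall>j<n. out_degree n T i = out_degree n T j)"

definition adj_mat :: "nat \<Rightarrow> (nat \<Rightarrow> nat \<Rightarrow> bool) \<Rightarrow> int mat" where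
  "adj_mat n T = mat n n (\<lambda>(i,j). if T i j then 1 else 0)"

definition skew_adj_mat :: "nat \<Rightarrow> (nat \<Rightarrow> nat \<Rightarrow> bool) \<Rightarrow> int mat" where
  "skew_adj_mat n T = adj_mat n T - transpose_mat (adj_mat n T)"

definition principal_submatrix :: "'a mat \<Rightarrow> nat set \<Rightarrow> 'a mat" where
  "principal_submatrix M I = submatrix M I I"

definition k_char_poly_monomorphic :: "nat \<Rightarrow> 'a :: comm_ring_1 mat \<Rightarrow> bool" where
  "k_char_poly_monomorphic k M \<longleftrightarrow>
     (\<forall>I J. I \<subseteq> {0..<dim_row M} \<and> card I = k \<and> J \<subseteq> {0..<dim_row M} \<and> card J = k \<longrightarrow>
        char_poly (principal_submatrix M I) = char_poly (principal_submatrix M J))"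

definition spectrally_monomorphic :: "nat \<Rightarrow> nat \<Rightarrow> (nat \<Rightarrow> nat \<Rightarrow> bool) \<Rightarrow> bool" where
  "spectrally_monomorphic k n T \<longleftrightarrow> k_char_poly_monomorphic k (adj_mat n T)"

definition skew_spectrally_monomorphic :: "nat \<Rightarrow> nat \<Rightarrow> (nat \<Rightarrow> nat \<Rightarrow> bool) \<Rightarrow> bool" where
  "skew_spectrally_monomorphic k n T \<longleftrightarrow> k_char_poly_monomorphic k (skew_adj_mat n T)"

end

theory Submission
  imports Defs
begin

text \<open>
  For a tournament, A = (S + J - I)/2, where J is the all-ones matrix. Regularity makes every
  line sum of S vanish, so K = w I - S has all line sums equal to w. For such a K, adding all
  rows and then all columns into line v does not change det K and produces a matrix bordered
  by w with corner n w; expanding at the corner and rescaling the border yields, for the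
  principal minors K_v obtained by deleting line v,
    w^2 det (K_v - J) = (w^2 - n w) det K_v + det K.
  For w = 2 z + 1 the left minor is 2^(n-1) times the characteristic polynomial of A_v at z,
  the right one is that of S_v at w, and det K does not depend on v. Since w^2 - n w and w^2
  are nonzero at infinitely many such points, the polynomials of A_v and A_v' agree exactly when
  those of S_v and S_v' do.
\<close>

lemma index_mat_delete:
  assumes "i < dim_row A - 1" and "j < dim_col A - 1"
  shows "mat_delete A u v $$ (i,j) = A $$ (insert_index u i, insert_index v j)"
  using assms unfolding mat_delete_def insert_index_def by simp

lemma insert_index_less: "i < n - 1 \<Longrightarrow> u < n \<Longrightarrow> insert_index u i < n"
  unfolding insert_index_def by auto

lemma insert_index_eq_iff: "insert_index u i = insert_index u j \<longleftrightarrow> i = j"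
  unfolding insert_index_def by auto

lemma det_unit_column:
  fixes X :: "'a::comm_ring_1 mat"
  assumes X: "X \<in> carrier_mat n n" and v: "v < n"
    and zero: "\<And>i. i < n \<Longrightarrow> i \<noteq> v \<Longrightarrow> X $$ (i,v) = 0"
  shows "det X = X $$ (v,v) * det (mat_delete X v v)"
proof -
  have "det X = (\<Sum>i<n. X $$ (i,v) * cofactor X i v)" by (rule laplace_expansion_column[OF X v])
  also have "\<dots> = X $$ (v,v) * cofactor X v v"
    using v zero by (subst sum.remove[of _ v]) (auto intro!: sum.neutral)
  finally show ?thesis unfolding cofactor_def by (simp add: minus_one_power_iff)
qed

lemma det_update_diagonal_entry:
  fixes X Y :: "'a::comm_ring_1 mat"
  assumes X: "X \<in> carrier_mat n n" and Y: "Y \<in> carrier_mat n n" and v: "v < n"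
    and eq: "\<And>i j. i < n \<Longrightarrow> j < n \<Longrightarrow> (i,j) \<noteq> (v,v) \<Longrightarrow> X $$ (i,j) = Y $$ (i,j)"
  shows "det X = det Y + (X $$ (v,v) - Y $$ (v,v)) * det (mat_delete X v v)"
proof -
  have cof: "cofactor X i v = cofactor Y i v" if "i < n" for i
  proof -
    have "mat_delete X i v = mat_delete Y i v"
      unfolding mat_delete_def using X Y that v eq by (intro eq_matI) auto
    thus ?thesis unfolding cofactor_def by simp
  qed
  have "det X = (\<Sum>i<n. X $$ (i,v) * cofactor X i v)" by (rule laplace_expansion_column[OF X v])
  also have "\<dots> = (\<Sum>i<n. Y $$ (i,v) * cofactor Y i v)
      + (\<Sum>i<n. (X $$ (i,v) - Y $$ (i,v)) * cofactor X i v)"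
    by (simp add: cof sum.distrib[symmetric] algebra_simps)
  also have "(\<Sum>i<n. Y $$ (i,v) * cofactor Y i v) = det Y"
    by (rule laplace_expansion_column[OF Y v, symmetric])
  also have "(\<Sum>i<n. (X $$ (i,v) - Y $$ (i,v)) * cofactor X i v)
      = (X $$ (v,v) - Y $$ (v,v)) * cofactor X v v"
    using v eq by (subst sum.remove[of _ v]) (auto intro!: sum.neutral)
  finally show ?thesis unfolding cofactor_def by (simp add: minus_one_power_iff)
qed

definition border_mat :: "nat \<Rightarrow> 'a \<Rightarrow> 'a \<Rightarrow> 'a mat \<Rightarrow> 'a mat" where
  "border_mat v b c K = mat (dim_row K) (dim_col K)
     (\<lambda>(i,j). if i = v \<and> j = v then c else if i = v \<or> j = v then b else K $$ (i,j))"

lemma border_mat_carrier [simp]: "K \<in> carrier_mat n m \<Longrightarrow> border_mat v b c K \<in> carrier_mat n m"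
  unfolding border_mat_def by simp

lemma mat_delete_border_mat [simp]: "mat_delete (border_mat v b c K) v v = mat_delete K v v"
  unfolding border_mat_def mat_delete_def by (rule eq_matI) auto

lemma index_border_mat:
  "i < dim_row K \<Longrightarrow> j < dim_col K \<Longrightarrow> border_mat v b c K $$ (i,j)
    = (if i = v \<and> j = v then c else if i = v \<or> j = v then b else K $$ (i,j))"
  unfolding border_mat_def by simp

lemma det_border_mat_corner:
  fixes K :: "'a::comm_ring_1 mat"
  assumes K: "K \<in> carrier_mat n n" and v: "v < n"
  shows "det (border_mat v b c K) = det (border_mat v b 0 K) + c * det (mat_delete K v v)"
proof -
  have "det (border_mat v b c K) = det (border_mat v b 0 K)
      + (border_mat v b c K $$ (v,v) - border_mat v b 0 K $$ (v,v))
        * det (mat_delete (border_mat v b c K) v v)"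
    by (rule det_update_diagonal_entry[of _ n]) (use K v in \<open>auto simp: index_border_mat\<close>)
  thus ?thesis using K v by (simp add: index_border_mat)
qed

lemma det_border_mat_scale:
  fixes K :: "'a::comm_ring_1 mat"
  assumes K: "K \<in> carrier_mat n n" and v: "v < n"
  shows "det (border_mat v (a * b) (a^2 * c) K) = a^2 * det (border_mat v b c K)"
proof -
  let ?B = "border_mat v b c K"
  have B: "?B \<in> carrier_mat n n" using K by simp
  have "border_mat v (a * b) (a^2 * c) K = multrow v a (transpose_mat (multrow v a (transpose_mat ?B)))"
    using K by (intro eq_matI) (auto simp: border_mat_def power2_eq_square)
  hence "det (border_mat v (a * b) (a^2 * c) K) = a * det (multrow v a (transpose_mat ?B))"
    using B v by (simp add: det_multrow det_transpose)
  also have "\<dots> = a^2 * det ?B"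
    using B v by (simp add: det_multrow det_transpose power2_eq_square)
  finally show ?thesis .
qed

definition all_ones_mat :: "nat \<Rightarrow> 'a::one mat" where
  "all_ones_mat n = mat n n (\<lambda>_. 1)"

definition sum_rows_mat :: "nat \<Rightarrow> nat \<Rightarrow> 'a::zero_neq_one mat" where
  "sum_rows_mat n v = mat n n (\<lambda>(i,j). if i = v \<or> i = j then 1 else 0)"

lemma sum_rows_mat_dim [simp]:
  "dim_row (sum_rows_mat n v) = n" "dim_col (sum_rows_mat n v) = n"
  unfolding sum_rows_mat_def by simp_all

lemma sum_rows_mat_carrier [simp]: "sum_rows_mat n v \<in> carrier_mat n n"
  unfolding sum_rows_mat_def by simp

lemma index_sum_rows_mat [simp]:
  "i < n \<Longrightarrow> j < n \<Longrightarrow> sum_rows_mat n v $$ (i,j) = (if i = v \<or> i = j then 1 else 0)"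
  unfolding sum_rows_mat_def by simp

lemma det_sum_rows_mat:
  assumes v: "v < n"
  shows "det (sum_rows_mat n v :: 'a::comm_ring_1 mat) = 1"
proof -
  have "det (sum_rows_mat n v :: 'a mat)
      = sum_rows_mat n v $$ (v,v) * det (mat_delete (sum_rows_mat n v) v v)"
    by (rule det_unit_column[OF sum_rows_mat_carrier v]) (use v in simp)
  also have "sum_rows_mat n v $$ (v,v) = (1 :: 'a)" using v by simp
  also have "mat_delete (sum_rows_mat n v) v v = (1\<^sub>m (n - 1) :: 'a mat)"
    using v by (intro eq_matI) (auto simp: index_mat_delete insert_index_less insert_index_eq_iff)
  finally show ?thesis by simp
qed

lemma sum_rows_mat_mult:
  fixes K :: "'a::comm_ring_1 mat"
  assumes K: "K \<in> carrier_mat n m" and v: "v < n"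
  shows "sum_rows_mat n v * K
    = mat n m (\<lambda>(i,j). if i = v then (\<Sum>l<n. K $$ (l,j)) else K $$ (i,j))"
proof (rule eq_matI)
  fix i j assume "i < dim_row (mat n m (\<lambda>(i,j). if i = v then (\<Sum>l<n. K $$ (l,j)) else K $$ (i,j)))"
    and "j < dim_col (mat n m (\<lambda>(i,j). if i = v then (\<Sum>l<n. K $$ (l,j)) else K $$ (i,j)))"
  hence i: "i < n" and j: "j < m" by auto
  have "(sum_rows_mat n v * K) $$ (i,j) = (\<Sum>l<n. (if i = v \<or> i = l then 1 else 0) * K $$ (l,j))"
    using K i j by (simp add: sum_rows_mat_def scalar_prod_def lessThan_atLeast0)
  thus "(sum_rows_mat n v * K) $$ (i,j)
    = mat n m (\<lambda>(i,j). if i = v then (\<Sum>l<n. K $$ (l,j)) else K $$ (i,j)) $$ (i,j)"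
    using i j by (simp add: if_distrib[of "\<lambda>x. x * _"] cong: if_cong)
qed (use K in auto)

lemma mult_transpose_sum_rows_mat:
  fixes K :: "'a::comm_ring_1 mat"
  assumes K: "K \<in> carrier_mat m n" and v: "v < n"
  shows "K * transpose_mat (sum_rows_mat n v)
    = mat m n (\<lambda>(i,j). if j = v then (\<Sum>l<n. K $$ (i,l)) else K $$ (i,j))"
proof -
  have "transpose_mat (sum_rows_mat n v * transpose_mat K) = K * transpose_mat (sum_rows_mat n v)"
    using K by (subst transpose_mult[of _ n n _ m]) auto
  hence "K * transpose_mat (sum_rows_mat n v) = transpose_mat (sum_rows_mat n v * transpose_mat K)"
    by simp
  also have "\<dots> = mat m n (\<lambda>(i,j). if j = v then (\<Sum>l<n. K $$ (i,l)) else K $$ (i,j))"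
    using K v by (subst sum_rows_mat_mult) auto
  finally show ?thesis .
qed

lemma transpose_sum_rows_mat_mult:
  fixes X :: "'a::comm_ring_1 mat"
  assumes X: "X \<in> carrier_mat n m" and v: "v < n"
  shows "transpose_mat (sum_rows_mat n v) * X
    = mat n m (\<lambda>(i,j). if i = v then X $$ (v,j) else X $$ (i,j) + X $$ (v,j))"
proof (rule eq_matI)
  fix i j assume "i < dim_row (mat n m (\<lambda>(i,j). if i = v then X $$ (v,j) else X $$ (i,j) + X $$ (v,j)))"
    and "j < dim_col (mat n m (\<lambda>(i,j). if i = v then X $$ (v,j) else X $$ (i,j) + X $$ (v,j)))"
  hence i: "i < n" and j: "j < m" by auto
  have "(transpose_mat (sum_rows_mat n v) * X) $$ (i,j)
      = (\<Sum>l<n. (if l = v then X $$ (l,j) else 0) + (if l = i \<and> i \<noteq> v then X $$ (l,j) else 0))"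
    using X i j by (auto simp: sum_rows_mat_def scalar_prod_def lessThan_atLeast0 intro!: sum.cong)
  thus "(transpose_mat (sum_rows_mat n v) * X) $$ (i,j)
    = mat n m (\<lambda>(i,j). if i = v then X $$ (v,j) else X $$ (i,j) + X $$ (v,j)) $$ (i,j)"
    using i j v by (simp add: sum.distrib)
qed (use X in auto)

lemma det_border_mat_const_sums:
  fixes K :: "'a::comm_ring_1 mat"
  assumes K: "K \<in> carrier_mat n n" and v: "v < n"
    and rows: "\<And>i. i < n \<Longrightarrow> (\<Sum>j<n. K $$ (i,j)) = w"
    and cols: "\<And>j. j < n \<Longrightarrow> (\<Sum>i<n. K $$ (i,j)) = w"
  shows "det (border_mat v w (of_nat n * w) K) = det K"
proof -
  let ?L = "sum_rows_mat n v :: 'a mat"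
  define K1 where "K1 = mat n n (\<lambda>(i,j). if i = v then w else K $$ (i,j))"
  have K1: "K1 \<in> carrier_mat n n" unfolding K1_def by simp
  have LK: "?L * K = K1"
    unfolding K1_def sum_rows_mat_mult[OF K v] using cols by (intro eq_matI) auto
  have "(\<Sum>l<n. K1 $$ (i,l)) = (if i = v then of_nat n * w else w)" if "i < n" for i
    using that rows by (simp add: K1_def)
  hence LKL: "?L * K * transpose_mat ?L = border_mat v w (of_nat n * w) K"
    unfolding LK mult_transpose_sum_rows_mat[OF K1 v] using K v rows
    by (intro eq_matI) (auto simp: K1_def border_mat_def)
  have "det (?L * K * transpose_mat ?L) = det (?L * K) * det (transpose_mat ?L)"
    using K by (intro det_mult[of _ n]) auto
  also have "det (?L * K) = det K"
    using det_mult[OF sum_rows_mat_carrier K] det_sum_rows_mat[OF v, where 'a = 'a] by simp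
  also have "det (transpose_mat ?L) = 1"
    using det_transpose[of ?L n] det_sum_rows_mat[OF v] by simp
  finally show ?thesis unfolding LKL by simp
qed

lemma det_border_mat_ones:
  fixes K :: "'a::comm_ring_1 mat"
  assumes K: "K \<in> carrier_mat n n" and v: "v < n"
  shows "det (border_mat v 1 1 K) = det (mat_delete K v v - all_ones_mat (n - 1))"
proof -
  let ?L = "sum_rows_mat n v :: 'a mat"
  \<comment> \<open>border_mat v 1 1 K with row v subtracted from every other row\<close>
  define M where "M = mat n n (\<lambda>(i,j). if i = v then 1 else if j = v then 0 else K $$ (i,j) - 1)"
  have M: "M \<in> carrier_mat n n" unfolding M_def by simp
  have LM: "transpose_mat ?L * M = border_mat v 1 1 K"
    unfolding transpose_sum_rows_mat_mult[OF M v] using K v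
    by (intro eq_matI) (auto simp: M_def border_mat_def)
  have "mat_delete M v v = mat_delete K v v - all_ones_mat (n - 1)"
    using K unfolding M_def mat_delete_def all_ones_mat_def by (intro eq_matI) auto
  hence "det M = det (mat_delete K v v - all_ones_mat (n - 1))"
    using det_unit_column[OF M v] v by (simp add: M_def)
  moreover have "det (transpose_mat ?L) = 1"
    using det_transpose[of ?L n] det_sum_rows_mat[OF v] by simp
  hence "det (transpose_mat ?L * M) = det M"
    using det_mult[OF _ M, of "transpose_mat ?L"] by simp
  ultimately show ?thesis unfolding LM by simp
qed

lemma det_mat_delete_minus_all_ones:
  fixes K :: "'a::comm_ring_1 mat"
  assumes K: "K \<in> carrier_mat n n" and v: "v < n"
    and rows: "\<And>i. i < n \<Longrightarrow> (\<Sum>j<n. K $$ (i,j)) = w"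
    and cols: "\<And>j. j < n \<Longrightarrow> (\<Sum>i<n. K $$ (i,j)) = w"
  shows "w^2 * det (mat_delete K v v - all_ones_mat (n - 1))
    = (w^2 - of_nat n * w) * det (mat_delete K v v) + det K"
proof -
  let ?D = "det (mat_delete K v v)"
  have "w^2 * det (mat_delete K v v - all_ones_mat (n - 1)) = w^2 * det (border_mat v 1 1 K)"
    by (simp add: det_border_mat_ones[OF K v])
  also have "\<dots> = w^2 * det (border_mat v 1 0 K) + w^2 * ?D"
    by (simp add: det_border_mat_corner[OF K v, of 1 1] algebra_simps)
  also have "w^2 * det (border_mat v 1 0 K) = det (border_mat v w 0 K)"
    using det_border_mat_scale[OF K v, of w 1 0] by simp
  also have "det (border_mat v w 0 K) = det K - of_nat n * w * ?D"
    using det_border_mat_corner[OF K v, of w "of_nat n * w"] det_border_mat_const_sums[OF K v rows cols]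
    by simp
  finally show ?thesis by (simp add: algebra_simps)
qed

lemma poly_char_poly:
  assumes "A \<in> carrier_mat n n"
  shows "poly (char_poly A) z = det (z \<cdot>\<^sub>m 1\<^sub>m n - A)"
  unfolding char_poly_def using assms
  by (intro poly_det_cong[of _ n]) (auto simp: char_poly_matrix_def)

lemma poly_eqI_on_range:
  fixes p q :: "'a::idom poly" and f :: "nat \<Rightarrow> 'a"
  assumes "inj f" and "\<And>k. poly p (f k) = poly q (f k)"
  shows "p = q"
proof (rule ccontr)
  assume "p \<noteq> q"
  hence "finite {x. poly (p - q) x = 0}" by (intro poly_roots_finite) simp
  moreover have "range f \<subseteq> {x. poly (p - q) x = 0}" using assms(2) by auto
  ultimately show False using range_inj_infinite[OF assms(1)] finite_subset by blast
qed

lemma pick_Diff_singleton: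
  assumes v: "v < n"
  shows "i < n - 1 \<Longrightarrow> pick ({0..<n} - {v}) i = insert_index v i"
proof (induction i)
  case 0
  thus ?case using v by (cases "v = 0") (auto simp: insert_index_def intro!: Least_equality)
next
  case (Suc i)
  thus ?case using v
    by (auto simp: insert_index_def intro!: Least_equality split: if_splits)
qed

lemma principal_submatrix_Diff_singleton:
  assumes M: "M \<in> carrier_mat n n" and v: "v < n"
  shows "principal_submatrix M ({0..<n} - {v}) = mat_delete M v v"
proof -
  have "{i. i < n \<and> i \<in> {0..<n} - {v}} = {0..<n} - {v}" by auto
  hence "card {i. i < n \<and> i \<in> {0..<n} - {v}} = n - 1" using v by simp
  thus ?thesis unfolding principal_submatrix_def submatrix_def mat_delete_def using M
    by (intro eq_matI) (auto simp: pick_Diff_singleton[OF v] insert_index_def)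
qed

lemma subset_card_eq_diff_one_obtains:
  assumes "I \<subseteq> {0..<n}" and "card I = n - 1" and "0 < n"
  obtains v where "v < n" and "I = {0..<n} - {v}"
proof -
  have "card ({0..<n} - I) = 1" using assms by (simp add: card_Diff_subset finite_subset)
  then obtain v where v: "{0..<n} - I = {v}" by (auto simp: card_Suc_eq)
  hence "v < n" and "I = {0..<n} - {v}" using assms(1) by auto
  thus ?thesis by (rule that)
qed

lemma k_char_poly_monomorphic_diff_one_iff:
  assumes M: "M \<in> carrier_mat n n"
  shows "k_char_poly_monomorphic (n - 1) M
    \<longleftrightarrow> (\<forall>v<n. \<forall>v'<n. char_poly (mat_delete M v v) = char_poly (mat_delete M v' v'))"
    (is "_ \<longleftrightarrow> ?minors")
proof (cases "n = 0")
  case True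
  have "k_char_poly_monomorphic (n - 1) M"
    unfolding k_char_poly_monomorphic_def
  proof (intro allI impI)
    fix I J assume "I \<subseteq> {0..<dim_row M} \<and> card I = n - 1 \<and> J \<subseteq> {0..<dim_row M} \<and> card J = n - 1"
    hence "I = {}" and "J = {}" using M True by auto
    thus "char_poly (principal_submatrix M I) = char_poly (principal_submatrix M J)" by simp
  qed
  thus ?thesis using True by simp
next
  case False
  have dim: "dim_row M = n" using M by simp
  show ?thesis
  proof
    assume mono: "k_char_poly_monomorphic (n - 1) M"
    show ?minors
    proof (intro allI impI)
      fix v v' assume v: "v < n" and v': "v' < n"
      have "{0..<n} - {v} \<subseteq> {0..<n} \<and> card ({0..<n} - {v}) = n - 1
          \<and> {0..<n} - {v'} \<subseteq> {0..<n} \<and> card ({0..<n} - {v'}) = n - 1"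
        using v v' by auto
      hence "char_poly (principal_submatrix M ({0..<n} - {v}))
          = char_poly (principal_submatrix M ({0..<n} - {v'}))"
        by (rule mono[unfolded k_char_poly_monomorphic_def dim, rule_format])
      thus "char_poly (mat_delete M v v) = char_poly (mat_delete M v' v')"
        by (simp add: principal_submatrix_Diff_singleton[OF M v] principal_submatrix_Diff_singleton[OF M v'])
    qed
  next
    assume minors: ?minors
    show "k_char_poly_monomorphic (n - 1) M"
      unfolding k_char_poly_monomorphic_def dim
    proof (intro allI impI)
      fix I J assume "I \<subseteq> {0..<n} \<and> card I = n - 1 \<and> J \<subseteq> {0..<n} \<and> card J = n - 1"
      hence I: "I \<subseteq> {0..<n}" "card I = n - 1" and J: "J \<subseteq> {0..<n}" "card J = n - 1" by simp_all
      obtain v where v: "v < n" "I = {0..<n} - {v}"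
        using subset_card_eq_diff_one_obtains[OF I] False by blast
      obtain v' where v': "v' < n" "J = {0..<n} - {v'}"
        using subset_card_eq_diff_one_obtains[OF J] False by blast
      have "char_poly (mat_delete M v v) = char_poly (mat_delete M v' v')"
        using minors v(1) v'(1) by blast
      thus "char_poly (principal_submatrix M I) = char_poly (principal_submatrix M J)"
        unfolding v(2) v'(2) principal_submatrix_Diff_singleton[OF M v(1)]
          principal_submatrix_Diff_singleton[OF M v'(1)] .
    qed
  qed
qed

(* Jordan_Normal_Form also defines adj_mat (the adjugate), hence the qualified Defs.adj_mat_def. *)
lemma adj_mat_dim [simp]: "dim_row (adj_mat n T) = n" "dim_col (adj_mat n T) = n"
  unfolding Defs.adj_mat_def by simp_all

lemma skew_adj_mat_dim [simp]: "dim_row (skew_adj_mat n T) = n" "dim_col (skew_adj_mat n T) = n"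
  unfolding skew_adj_mat_def by simp_all

lemma adj_mat_carrier [simp]: "adj_mat n T \<in> carrier_mat n n"
  by (rule carrier_matI) simp_all

lemma skew_adj_mat_carrier [simp]: "skew_adj_mat n T \<in> carrier_mat n n"
  by (rule carrier_matI) simp_all

lemma index_skew_adj_mat:
  "i < n \<Longrightarrow> j < n \<Longrightarrow> skew_adj_mat n T $$ (i,j) = adj_mat n T $$ (i,j) - adj_mat n T $$ (j,i)"
  unfolding skew_adj_mat_def Defs.adj_mat_def by simp

lemma adj_mat_row_sum: "i < n \<Longrightarrow> (\<Sum>j<n. adj_mat n T $$ (i,j)) = int (out_degree n T i)"
  unfolding Defs.adj_mat_def out_degree_def by (simp add: sum.If_cases Int_def conj_commute)

lemma tournament_two_adj_mat:
  assumes T: "tournament n T" and i: "i < n" and j: "j < n"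
  shows "2 * adj_mat n T $$ (i,j) = skew_adj_mat n T $$ (i,j) + 1 - (if i = j then 1 else 0)"
proof (cases "i = j")
  case True
  have "\<not> T i i" using T i unfolding tournament_def by blast
  thus ?thesis using True i by (simp add: index_skew_adj_mat Defs.adj_mat_def)
next
  case False
  have "T i j \<longleftrightarrow> \<not> T j i" using T i j False unfolding tournament_def by blast
  thus ?thesis using False i j by (simp add: index_skew_adj_mat Defs.adj_mat_def)
qed

lemma skew_adj_mat_total_sum: "(\<Sum>i<n. \<Sum>j<n. skew_adj_mat n T $$ (i,j)) = 0"
proof -
  have "(\<Sum>i<n. \<Sum>j<n. adj_mat n T $$ (j,i)) = (\<Sum>i<n. \<Sum>j<n. adj_mat n T $$ (i,j))"
    by (rule sum.swap)
  thus ?thesis by (simp add: index_skew_adj_mat sum_subtractf)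
qed

lemma regular_tournament_skew_row_sum:
  assumes T: "regular_tournament n T" and i: "i < n"
  shows "(\<Sum>j<n. skew_adj_mat n T $$ (i,j)) = 0"
proof -
  define d where "d = 2 * int (out_degree n T i) - (int n - 1)"
  have row: "(\<Sum>j<n. skew_adj_mat n T $$ (k,j)) = d" if k: "k < n" for k
  proof -
    have "(\<Sum>j<n. skew_adj_mat n T $$ (k,j))
        = (\<Sum>j<n. 2 * adj_mat n T $$ (k,j) - 1 + (if k = j then 1 else 0))"
      using T k unfolding regular_tournament_def by (auto intro!: sum.cong simp: tournament_two_adj_mat)
    also have "\<dots> = 2 * int (out_degree n T k) - (int n - 1)"
      using k by (simp add: sum.distrib sum_subtractf sum_distrib_left[symmetric] adj_mat_row_sum)
    finally show ?thesis
      using T i k unfolding regular_tournament_def d_def by metis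
  qed
  have "int n * d = 0"
    using skew_adj_mat_total_sum[of n T] by (simp add: row)
  thus ?thesis using row[OF i] i by simp
qed

lemma regular_tournament_skew_col_sum:
  assumes "regular_tournament n T" and j: "j < n"
  shows "(\<Sum>i<n. skew_adj_mat n T $$ (i,j)) = 0"
proof -
  have "(\<Sum>i<n. skew_adj_mat n T $$ (i,j)) = - (\<Sum>i<n. skew_adj_mat n T $$ (j,i))"
    using j by (simp add: index_skew_adj_mat sum_negf[symmetric])
  thus ?thesis using regular_tournament_skew_row_sum[OF assms] by simp
qed

lemma tournament_mat_delete_shifted_skew:
  assumes T: "tournament n T" and v: "v < n"
  shows "mat_delete ((2 * z + 1) \<cdot>\<^sub>m 1\<^sub>m n - skew_adj_mat n T) v v - all_ones_mat (n - 1)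
    = 2 \<cdot>\<^sub>m (z \<cdot>\<^sub>m 1\<^sub>m (n - 1) - mat_delete (adj_mat n T) v v)"
proof (rule eq_matI)
  fix i j assume "i < dim_row (2 \<cdot>\<^sub>m (z \<cdot>\<^sub>m 1\<^sub>m (n - 1) - mat_delete (adj_mat n T) v v))"
    and "j < dim_col (2 \<cdot>\<^sub>m (z \<cdot>\<^sub>m 1\<^sub>m (n - 1) - mat_delete (adj_mat n T) v v))"
  hence "i < n - 1" and "j < n - 1" by simp_all
  thus "(mat_delete ((2 * z + 1) \<cdot>\<^sub>m 1\<^sub>m n - skew_adj_mat n T) v v - all_ones_mat (n - 1)) $$ (i,j)
      = (2 \<cdot>\<^sub>m (z \<cdot>\<^sub>m 1\<^sub>m (n - 1) - mat_delete (adj_mat n T) v v)) $$ (i,j)"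
    using T v unfolding all_ones_mat_def
    by (simp add: index_mat_delete insert_index_less insert_index_eq_iff tournament_two_adj_mat)
qed (simp_all add: all_ones_mat_def)

lemma regular_tournament_char_poly_relation:
  fixes z :: int
  assumes T: "regular_tournament n T" and v: "v < n"
  defines "S \<equiv> skew_adj_mat n T" and "w \<equiv> 2 * z + 1"
  shows "w^2 * (2^(n - 1) * poly (char_poly (mat_delete (adj_mat n T) v v)) z)
    = (w^2 - int n * w) * poly (char_poly (mat_delete S v v)) w + poly (char_poly S) w"
proof -
  have S: "S \<in> carrier_mat n n" unfolding S_def by simp
  define K where "K = w \<cdot>\<^sub>m 1\<^sub>m n - S"
  have K: "K \<in> carrier_mat n n" unfolding K_def by (rule minus_carrier_mat[OF S])
  have K_index: "K $$ (i,j) = (if i = j then w else 0) - S $$ (i,j)" if "i < n" "j < n" for i j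
    using that S unfolding K_def by simp
  have "(\<Sum>j<n. K $$ (i,j)) = w" if "i < n" for i
    using that regular_tournament_skew_row_sum[OF T that] by (simp add: K_index S_def sum_subtractf)
  moreover have "(\<Sum>i<n. K $$ (i,j)) = w" if "j < n" for j
    using that regular_tournament_skew_col_sum[OF T that] by (simp add: K_index S_def sum_subtractf)
  ultimately have minor: "w^2 * det (mat_delete K v v - all_ones_mat (n - 1))
      = (w^2 - int n * w) * det (mat_delete K v v) + det K"
    by (rule det_mat_delete_minus_all_ones[OF K v])
  have "det K = poly (char_poly S) w"
    unfolding K_def by (rule poly_char_poly[OF S, symmetric])
  moreover have "mat_delete K v v = w \<cdot>\<^sub>m 1\<^sub>m (n - 1) - mat_delete S v v"
    using K S v
    by (intro eq_matI) (simp_all add: K_index index_mat_delete insert_index_less insert_index_eq_iff)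
  hence "det (mat_delete K v v) = poly (char_poly (mat_delete S v v)) w"
    using poly_char_poly[OF mat_delete_carrier[OF S]] by simp
  moreover have "det (mat_delete K v v - all_ones_mat (n - 1))
      = 2^(n - 1) * poly (char_poly (mat_delete (adj_mat n T) v v)) z"
    using T v tournament_mat_delete_shifted_skew[of n T v z]
      poly_char_poly[OF mat_delete_carrier[OF adj_mat_carrier]]
    unfolding K_def S_def w_def regular_tournament_def by simp
  ultimately show ?thesis using minor by simp
qed

lemma regular_tournament_char_poly_mat_delete_eq_iff:
  assumes T: "regular_tournament n T" and v: "v < n" and v': "v' < n"
  shows "char_poly (mat_delete (adj_mat n T) v v) = char_poly (mat_delete (adj_mat n T) v' v')
    \<longleftrightarrow> char_poly (mat_delete (skew_adj_mat n T) v v) = char_poly (mat_delete (skew_adj_mat n T) v' v')"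
    (is "?cA v = ?cA v' \<longleftrightarrow> ?cS v = ?cS v'")
proof
  assume A: "?cA v = ?cA v'"
  show "?cS v = ?cS v'"
  proof (rule poly_eqI_on_range[where f = "\<lambda>k. 2 * (int k + int n) + 1"])
    fix k
    define w where "w = 2 * (int k + int n) + 1"
    have "w^2 - int n * w = w * (w - int n)" by (simp add: power2_eq_square algebra_simps)
    also have "\<dots> \<noteq> 0" unfolding w_def by simp
    finally show "poly (?cS v) w = poly (?cS v') w"
      using regular_tournament_char_poly_relation[OF T v, of "int k + int n"]
        regular_tournament_char_poly_relation[OF T v', of "int k + int n"] A
      unfolding w_def by simp
  qed (simp add: inj_def)
next
  assume S: "?cS v = ?cS v'"
  show "?cA v = ?cA v'"
  proof (rule poly_eqI_on_range[where f = int])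
    fix k
    have "(2 * int k + 1)^2 * (2^(n - 1) * poly (?cA v) (int k))
        = (2 * int k + 1)^2 * (2^(n - 1) * poly (?cA v') (int k))"
      using regular_tournament_char_poly_relation[OF T v, of "int k"]
        regular_tournament_char_poly_relation[OF T v', of "int k"] S
      by simp
    moreover have "(2 * int k + 1)^2 * 2^(n - 1) \<noteq> 0" by simp
    ultimately show "poly (?cA v) (int k) = poly (?cA v') (int k)" by simp
  qed (simp add: inj_def)
qed

theorem proposition5p4:
  fixes n :: nat and T :: "nat \<Rightarrow> nat \<Rightarrow> bool"
  assumes "regular_tournament n T"
  shows "spectrally_monomorphic (n - 1) n T \<longleftrightarrow> skew_spectrally_monomorphic (n - 1) n T"
  unfolding spectrally_monomorphic_def skew_spectrally_monomorphic_def
    k_char_poly_monomorphic_diff_one_iff[OF adj_mat_carrier]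
    k_char_poly_monomorphic_diff_one_iff[OF skew_adj_mat_carrier]
  using regular_tournament_char_poly_mat_delete_eq_iff[OF assms] by blast

end
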